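(* Let $G$ and $H$ be locally finite stiff graphs without isolated vertices. If $N(G)\cong N(H)$ as simplicial complexes, then $K_2\times G\cong K_2\times H$ as 2-colored graphs (i.e. via a graph isomorphism commuting with the first projections to $K_2$).
   Context: A graph $G$ is a set $V(G)$ with a symmetric subset $E(G)\subset V(G)\times V(G)$ (loops allowed); $N(v)=\{w:(v,w)\in E(G)\}$, $v$ isolated if $N(v)=\emptyset$; $G$ is locally finite if every $N(v)$ is finite, and stiff if $N(v)\subset N(w)$ implies $v=w$. The neighborhood complex $N(G)$ is the simplicial complex whose vertices are the non-isolated vertices of $G$ and whose simplices are the finite subsets contained in some $N(v)$. $K_2\times G$ has vertex set $\{1,2\}\times V(G)$, $((i,x),(j,y))$ an edge iff $i\neq j$ and $(x,y)\in E(G)$, and is 2-colored by the first projection to $K_2$ (vertices $\{1,2\}$, edges $(1,2),(2,1)$). *)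

theory Defs
  imports Main
begin

text \<open>A graph: a vertex set V with a symmetric edge relation E \<subseteq> V \<times> V (loops allowed).\<close>
type_synonym 'a graph = "'a set \<times> ('a \<times> 'a) set"

definition verts :: "'a graph \<Rightarrow> 'a set" where "verts G = fst G"
definition edges :: "'a graph \<Rightarrow> ('a \<times> 'a) set" where "edges G = snd G"

definition is_graph :: "'a graph \<Rightarrow> bool" where
  "is_graph G \<longleftrightarrow> edges G \<subseteq> verts G \<times> verts G \<and> sym (edges G)"

definition nbhd :: "'a graph \<Rightarrow> 'a \<Rightarrow> 'a set" where
  "nbhd G v = {w. (v, w) \<in> edges G}"

definition isolated :: "'a graph \<Rightarrow> 'a \<Rightarrow> bool" where
  "isolated G v \<longleftrightarrow> nbhd G v = {}"

definition no_isolated :: "'a graph \<Rightarrow> bool" where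
  "no_isolated G \<longleftrightarrow> (\<forall>v\<in>verts G. \<not> isolated G v)"

definition locally_finite :: "'a graph \<Rightarrow> bool" where
  "locally_finite G \<longleftrightarrow> (\<forall>v\<in>verts G. finite (nbhd G v))"

definition stiff :: "'a graph \<Rightarrow> bool" where
  "stiff G \<longleftrightarrow> (\<forall>v\<in>verts G. \<forall>w\<in>verts G. nbhd G v \<subseteq> nbhd G w \<longrightarrow> v = w)"

type_synonym 'a complex = "'a set \<times> 'a set set"

definition nbhd_complex :: "'a graph \<Rightarrow> 'a complex" where
  "nbhd_complex G =
     ({v \<in> verts G. \<not> isolated G v},
      {\<sigma>. finite \<sigma> \<and> (\<exists>v\<in>verts G. \<sigma> \<subseteq> nbhd G v)})"

definition complex_iso :: "'a complex \<Rightarrow> 'b complex \<Rightarrow> ('a \<Rightarrow> 'b) \<Rightarrow> bool" where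
  "complex_iso K L f \<longleftrightarrow> bij_betw f (fst K) (fst L) \<and>
     (\<forall>\<sigma>. \<sigma> \<subseteq> fst K \<longrightarrow> (\<sigma> \<in> snd K \<longleftrightarrow> f ` \<sigma> \<in> snd L))"

definition complexes_isomorphic :: "'a complex \<Rightarrow> 'b complex \<Rightarrow> bool" where
  "complexes_isomorphic K L \<longleftrightarrow> (\<exists>f. complex_iso K L f)"

definition K2_times :: "'a graph \<Rightarrow> (nat \<times> 'a) graph" where
  "K2_times G =
     ({1, 2} \<times> verts G,
      {((i, x), (j, y)). i \<in> {1, 2} \<and> j \<in> {1, 2} \<and> i \<noteq> j \<and> (x, y) \<in> edges G})"

definition graph_iso :: "'a graph \<Rightarrow> 'b graph \<Rightarrow> ('a \<Rightarrow> 'b) \<Rightarrow> bool" where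
  "graph_iso G H f \<longleftrightarrow> bij_betw f (verts G) (verts H) \<and>
     (\<forall>x\<in>verts G. \<forall>y\<in>verts G. (x, y) \<in> edges G \<longleftrightarrow> (f x, f y) \<in> edges H)"

definition two_colored_isomorphic :: "'a graph \<Rightarrow> 'b graph \<Rightarrow> bool" where
  "two_colored_isomorphic G H \<longleftrightarrow>
     (\<exists>\<phi>. graph_iso (K2_times G) (K2_times H) \<phi> \<and>
          (\<forall>p\<in>verts (K2_times G). fst (\<phi> p) = fst p))"

end

theory Submission
  imports Defs
begin

text \<open>
  In a locally finite stiff graph every neighbourhood N(v) is a simplex of
  the neighbourhood complex, every simplex lies in some N(v), and stiffness makes the
  N(v) pairwise incomparable; hence the facets of N(G) are exactly the neighbourhoods,
  and v \<mapsto> N(v) is a bijection from the vertices onto the facets.  An isomorphism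
  f : N(G) \<cong> N(H) maps facets bijectively to facets, so it induces a second vertex
  bijection g with f ` N(v) = N(g v).  Then x ~ y in G iff f x ~ g y in H, and such a
  pair (f, g) yields the colour-preserving isomorphism K_2 \<times> G \<cong> K_2 \<times> H
  sending (1, x) to (1, f x) and (2, x) to (2, g x).
\<close>

definition facet :: "'a complex \<Rightarrow> 'a set \<Rightarrow> bool" where
  "facet K \<sigma> \<longleftrightarrow> \<sigma> \<in> snd K \<and> (\<forall>\<tau>\<in>snd K. \<sigma> \<subseteq> \<tau> \<longrightarrow> \<tau> = \<sigma>)"

lemma complex_iso_inv:
  assumes iso: "complex_iso K L f"
  shows "complex_iso L K (inv_into (fst K) f)"
proof -
  have bij: "bij_betw f (fst K) (fst L)" and
    simplex: "\<And>\<sigma>. \<sigma> \<subseteq> fst K \<Longrightarrow> \<sigma> \<in> snd K \<longleftrightarrow> f ` \<sigma> \<in> snd L"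
    using iso unfolding complex_iso_def by auto
  have "\<sigma> \<in> snd L \<longleftrightarrow> inv_into (fst K) f ` \<sigma> \<in> snd K" if "\<sigma> \<subseteq> fst L" for \<sigma>
  proof -
    have "f ` inv_into (fst K) f ` \<sigma> = \<sigma>"
      using that bij by (simp add: image_inv_into_cancel bij_betw_imp_surj_on)
    moreover have "inv_into (fst K) f ` \<sigma> \<subseteq> fst K"
      using that bij by (auto simp: bij_betw_def inv_into_into)
    ultimately show ?thesis using simplex by metis
  qed
  then show ?thesis
    using bij_betw_inv_into[OF bij] unfolding complex_iso_def by blast
qed

text \<open>
  A complex isomorphism maps facets to facets, provided every simplex of both complexes
  consists of vertices (so that preimages of simplices are again vertex sets).
\<close>
lemma complex_iso_facet:
  assumes iso: "complex_iso K L f"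
    and L_on: "\<forall>\<tau>\<in>snd L. \<tau> \<subseteq> fst L"
    and \<sigma>: "facet K \<sigma>" "\<sigma> \<subseteq> fst K"
  shows "facet L (f ` \<sigma>)"
  unfolding facet_def
proof (intro conjI ballI impI)
  let ?h = "inv_into (fst K) f"
  have bij: "bij_betw f (fst K) (fst L)" and
    simplex: "\<And>\<sigma>. \<sigma> \<subseteq> fst K \<Longrightarrow> \<sigma> \<in> snd K \<longleftrightarrow> f ` \<sigma> \<in> snd L"
    using iso unfolding complex_iso_def by auto
  have inv_simplex: "\<And>\<tau>. \<tau> \<subseteq> fst L \<Longrightarrow> \<tau> \<in> snd L \<longleftrightarrow> ?h ` \<tau> \<in> snd K"
    using complex_iso_inv[OF iso] unfolding complex_iso_def by auto
  show "f ` \<sigma> \<in> snd L"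
    using \<sigma> simplex unfolding facet_def by blast
  fix \<tau> assume \<tau>: "\<tau> \<in> snd L" "f ` \<sigma> \<subseteq> \<tau>"
  have \<tau>_on: "\<tau> \<subseteq> fst L" using \<tau>(1) L_on by blast
  have "?h ` \<tau> \<in> snd K"
    using inv_simplex[OF \<tau>_on] \<tau>(1) by blast
  moreover have "\<sigma> \<subseteq> ?h ` \<tau>"
  proof
    fix x assume "x \<in> \<sigma>"
    then have "x = ?h (f x)" "f x \<in> \<tau>"
      using \<sigma>(2) \<tau>(2) bij by (auto simp: bij_betw_def)
    then show "x \<in> ?h ` \<tau>" by blast
  qed
  ultimately have "?h ` \<tau> = \<sigma>" using \<sigma>(1) unfolding facet_def by blast
  moreover have "f ` ?h ` \<tau> = \<tau>"
    using \<tau>_on bij by (simp add: image_inv_into_cancel bij_betw_imp_surj_on)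
  ultimately show "\<tau> = f ` \<sigma>" by simp
qed

lemma complex_iso_bij_facets:
  assumes iso: "complex_iso K L f"
    and K_on: "\<forall>\<sigma>\<in>snd K. \<sigma> \<subseteq> fst K" and L_on: "\<forall>\<tau>\<in>snd L. \<tau> \<subseteq> fst L"
  shows "bij_betw (image f) (Collect (facet K)) (Collect (facet L))"
proof -
  let ?h = "inv_into (fst K) f"
  have bij: "bij_betw f (fst K) (fst L)"
    using iso unfolding complex_iso_def by auto
  have facets_K: "Collect (facet K) \<subseteq> Pow (fst K)"
    using K_on unfolding facet_def by auto
  have "\<Union> (Collect (facet K)) \<subseteq> fst K" using facets_K by blast
  then have "inj_on (image f) (Collect (facet K))"
    using bij by (auto simp: bij_betw_def intro: inj_on_image inj_on_subset)
  moreover have "image f ` Collect (facet K) \<subseteq> Collect (facet L)"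
    using complex_iso_facet[OF iso L_on] facets_K by auto
  moreover have "\<tau> \<in> image f ` Collect (facet K)" if "facet L \<tau>" for \<tau>
  proof -
    have \<tau>_on: "\<tau> \<subseteq> fst L" using that L_on unfolding facet_def by blast
    have "facet K (?h ` \<tau>)"
      using complex_iso_facet[OF complex_iso_inv[OF iso] K_on that \<tau>_on] .
    moreover have "f ` ?h ` \<tau> = \<tau>"
      using \<tau>_on bij by (simp add: image_inv_into_cancel bij_betw_imp_surj_on)
    ultimately show ?thesis by (metis image_eqI mem_Collect_eq)
  qed
  ultimately show ?thesis unfolding bij_betw_def by blast
qed

lemma nbhd_subset_verts: "is_graph G \<Longrightarrow> nbhd G v \<subseteq> verts G"
  unfolding is_graph_def nbhd_def by auto

lemma edge_iff_mem_nbhd: "is_graph G \<Longrightarrow> (x, y) \<in> edges G \<longleftrightarrow> x \<in> nbhd G y"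
  unfolding is_graph_def nbhd_def sym_def by blast

lemma verts_nbhd_complex: "no_isolated G \<Longrightarrow> fst (nbhd_complex G) = verts G"
  unfolding no_isolated_def nbhd_complex_def by auto

lemma simplices_nbhd_complex:
  assumes "is_graph G" "no_isolated G"
  shows "\<forall>\<sigma>\<in>snd (nbhd_complex G). \<sigma> \<subseteq> fst (nbhd_complex G)"
proof
  fix \<sigma> assume "\<sigma> \<in> snd (nbhd_complex G)"
  then obtain v where "\<sigma> \<subseteq> nbhd G v" unfolding nbhd_complex_def by auto
  then show "\<sigma> \<subseteq> fst (nbhd_complex G)"
    using nbhd_subset_verts[OF assms(1)] verts_nbhd_complex[OF assms(2)] by blast
qed

lemma stiff_inj_nbhd: "stiff G \<Longrightarrow> inj_on (nbhd G) (verts G)"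
  unfolding stiff_def inj_on_def by blast

lemma facet_nbhd_complex_iff:
  assumes "locally_finite G" "stiff G"
  shows "facet (nbhd_complex G) \<sigma> \<longleftrightarrow> (\<exists>v\<in>verts G. \<sigma> = nbhd G v)"
proof
  assume "facet (nbhd_complex G) \<sigma>"
  then obtain v where v: "v \<in> verts G" "\<sigma> \<subseteq> nbhd G v"
    and max: "\<forall>\<tau>\<in>snd (nbhd_complex G). \<sigma> \<subseteq> \<tau> \<longrightarrow> \<tau> = \<sigma>"
    unfolding facet_def nbhd_complex_def by auto
  have "nbhd G v \<in> snd (nbhd_complex G)"
    using assms(1) v(1) unfolding locally_finite_def nbhd_complex_def by auto
  then show "\<exists>v\<in>verts G. \<sigma> = nbhd G v" using max v by metis
next
  assume "\<exists>v\<in>verts G. \<sigma> = nbhd G v"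
  then obtain v where v: "v \<in> verts G" "\<sigma> = nbhd G v" by blast
  have "\<tau> = \<sigma>" if \<tau>: "\<tau> \<in> snd (nbhd_complex G)" "\<sigma> \<subseteq> \<tau>" for \<tau>
  proof -
    obtain w where w: "w \<in> verts G" "\<tau> \<subseteq> nbhd G w"
      using \<tau>(1) unfolding nbhd_complex_def by auto
    then have "v = w" using assms(2) v \<tau>(2) unfolding stiff_def by blast
    then show ?thesis using v w \<tau>(2) by blast
  qed
  moreover have "\<sigma> \<in> snd (nbhd_complex G)"
    using assms(1) v unfolding locally_finite_def nbhd_complex_def by auto
  ultimately show "facet (nbhd_complex G) \<sigma>" unfolding facet_def by blast
qed

lemma bij_nbhd_facets:
  assumes "locally_finite G" "stiff G"
  shows "bij_betw (nbhd G) (verts G) (Collect (facet (nbhd_complex G)))"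
  using stiff_inj_nbhd[OF assms(2)] facet_nbhd_complex_iff[OF assms]
  unfolding bij_betw_def by auto

lemma nbhd_complex_iso_matching:
  assumes G: "is_graph G" "locally_finite G" "stiff G" "no_isolated G"
    and H: "is_graph H" "locally_finite H" "stiff H" "no_isolated H"
    and iso: "complex_iso (nbhd_complex G) (nbhd_complex H) f"
  obtains g where "bij_betw g (verts G) (verts H)"
    and "\<And>v. v \<in> verts G \<Longrightarrow> f ` nbhd G v = nbhd H (g v)"
proof
  let ?g = "inv_into (verts H) (nbhd H) \<circ> (image f \<circ> nbhd G)"
  have facets: "bij_betw (image f) (Collect (facet (nbhd_complex G)))
      (Collect (facet (nbhd_complex H)))"
    using complex_iso_bij_facets[OF iso simplices_nbhd_complex[OF G(1,4)]
        simplices_nbhd_complex[OF H(1,4)]] .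
  show "bij_betw ?g (verts G) (verts H)"
    using bij_betw_trans[OF bij_betw_trans[OF bij_nbhd_facets[OF G(2,3)] facets]
        bij_betw_inv_into[OF bij_nbhd_facets[OF H(2,3)]]] .
  fix v assume "v \<in> verts G"
  then have "facet (nbhd_complex G) (nbhd G v)"
    using facet_nbhd_complex_iff[OF G(2,3)] by blast
  then have "facet (nbhd_complex H) (f ` nbhd G v)"
    using bij_betw_apply[OF facets] by simp
  then obtain w where "w \<in> verts H" "f ` nbhd G v = nbhd H w"
    using facet_nbhd_complex_iff[OF H(2,3)] by auto
  then show "f ` nbhd G v = nbhd H (?g v)"
    by (simp add: f_inv_into_f)
qed

lemma verts_K2_times: "verts (K2_times G) = {1, 2} \<times> verts G"
  unfolding K2_times_def verts_def by simp

lemma edge_K2_times: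
  "((i, x), (j, y)) \<in> edges (K2_times G) \<longleftrightarrow> i \<in> {1, 2} \<and> j \<in> {1, 2} \<and> i \<noteq> j \<and> (x, y) \<in> edges G"
  unfolding K2_times_def edges_def by simp

lemma two_colored_isomorphic_from_pair:
  assumes G: "is_graph G" and H: "is_graph H"
    and f: "bij_betw f (verts G) (verts H)" and g: "bij_betw g (verts G) (verts H)"
    and adj: "\<And>x y. x \<in> verts G \<Longrightarrow> y \<in> verts G \<Longrightarrow> (x, y) \<in> edges G \<longleftrightarrow> (f x, g y) \<in> edges H"
  shows "two_colored_isomorphic G H"
proof -
  define \<phi> where "\<phi> p = (fst p, if fst p = 1 then f (snd p) else g (snd p))" for p :: "nat \<times> 'a"
  have "bij_betw \<phi> ({1} \<times> verts G) ({1} \<times> verts H)"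
    using bij_betw_map_prod[OF bij_betw_id f]
    by (rule bij_betw_cong[THEN iffD1, rotated]) (auto simp: \<phi>_def)
  moreover have "bij_betw \<phi> ({2} \<times> verts G) ({2} \<times> verts H)"
    using bij_betw_map_prod[OF bij_betw_id g]
    by (rule bij_betw_cong[THEN iffD1, rotated]) (auto simp: \<phi>_def)
  ultimately have "bij_betw \<phi> ({1} \<times> verts G \<union> {2} \<times> verts G) ({1} \<times> verts H \<union> {2} \<times> verts H)"
    by (rule bij_betw_combine) auto
  then have bij: "bij_betw \<phi> (verts (K2_times G)) (verts (K2_times H))"
    unfolding verts_K2_times by (metis Sigma_Un_distrib1 insert_is_Un)
  have sym_G: "(x, y) \<in> edges G \<longleftrightarrow> (y, x) \<in> edges G" for x y
    using G unfolding is_graph_def sym_def by blast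
  have sym_H: "(x, y) \<in> edges H \<longleftrightarrow> (y, x) \<in> edges H" for x y
    using H unfolding is_graph_def sym_def by blast
  have "(p, q) \<in> edges (K2_times G) \<longleftrightarrow> (\<phi> p, \<phi> q) \<in> edges (K2_times H)"
    if pq_verts: "p \<in> verts (K2_times G)" "q \<in> verts (K2_times G)" for p q
  proof -
    obtain i x j y where pq: "p = (i, x)" "q = (j, y)" "i \<in> {1, 2}" "j \<in> {1, 2}"
      "x \<in> verts G" "y \<in> verts G"
      using pq_verts unfolding verts_K2_times by auto
    then consider "i = j" | "i = 1" "j = 2" | "i = 2" "j = 1" by auto
    then show ?thesis
      by cases (use pq adj[of x y] adj[of y x] sym_G[of x y] sym_H[of "g x" "f y"] in
                \<open>auto simp: \<phi>_def edge_K2_times\<close>)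
  qed
  then have "graph_iso (K2_times G) (K2_times H) \<phi>"
    using bij unfolding graph_iso_def by blast
  moreover have "\<forall>p\<in>verts (K2_times G). fst (\<phi> p) = fst p"
    unfolding \<phi>_def by simp
  ultimately show ?thesis unfolding two_colored_isomorphic_def by blast
qed

theorem corollary4p12:
  fixes G :: "'a graph" and H :: "'b graph"
  assumes "is_graph G" and "is_graph H"
    and "locally_finite G" and "locally_finite H"
    and "stiff G" and "stiff H"
    and "no_isolated G" and "no_isolated H"
    and "complexes_isomorphic (nbhd_complex G) (nbhd_complex H)"
  shows "two_colored_isomorphic G H"
proof -
  obtain f where iso: "complex_iso (nbhd_complex G) (nbhd_complex H) f"
    using assms(9) unfolding complexes_isomorphic_def by blast
  then have f: "bij_betw f (verts G) (verts H)"
    using verts_nbhd_complex assms(7,8) unfolding complex_iso_def by metis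
  obtain g where g: "bij_betw g (verts G) (verts H)"
    and match: "\<And>v. v \<in> verts G \<Longrightarrow> f ` nbhd G v = nbhd H (g v)"
    using nbhd_complex_iso_matching[OF assms(1,3,5,7) assms(2,4,6,8) iso] by blast
  have "(x, y) \<in> edges G \<longleftrightarrow> (f x, g y) \<in> edges H"
    if "x \<in> verts G" "y \<in> verts G" for x y
  proof -
    have "(x, y) \<in> edges G \<longleftrightarrow> f x \<in> f ` nbhd G y"
      using edge_iff_mem_nbhd[OF assms(1)] inj_on_image_mem_iff[OF bij_betw_imp_inj_on[OF f]
          that(1) nbhd_subset_verts[OF assms(1)]] by simp
    also have "\<dots> \<longleftrightarrow> (f x, g y) \<in> edges H"
      using match[OF that(2)] edge_iff_mem_nbhd[OF assms(2)] by simp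
    finally show ?thesis .
  qed
  then show ?thesis
    using two_colored_isomorphic_from_pair[OF assms(1,2) f g] by blast
qed

end
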